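(* Let $d\geq1$, $q>1$, $0<\alpha<d$. Let $w:(0,\infty)\to\mathbb{R}$ be a measurable function such that $$\int_0^\infty|w(\rho)|^{\frac q{q-1}}\rho^{\frac{\alpha q+1-d}{q-1}}\,d\rho<\infty,$$ and set $W(\rho)=\int_\rho^\infty w(t)\,dt$. Then for every measurable function $u$ on $\mathbb{R}^d$, $$\left|\int_{\mathbb{R}^d}|u(x)|W(|x|)\,dx\right|\lesssim\left(\int_0^\infty|w(\rho)|^{\frac q{q-1}}\rho^{\frac{\alpha q+1-d}{q-1}}d\rho\right)^{\frac{q-1}q}\left(\int_0^\infty\left(\fint_{B_\rho(0)}|u(y)|\,dy\right)^q\rho^{(d-\alpha)q+d-1}d\rho\right)^{\frac1q},$$ with an implicit constant depending only on $d$, and consequently there is $C>0$ (depending on $d,q,\alpha,w$) such that $$\left|\int_{\mathbb{R}^d}|u(x)|W(|x|)\,dx\right|\leq C\left\|\tfrac{1}{|x|^\alpha}\star|u|\right\|_{L^q(\mathbb{R}^d)}.$$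
   Context: $B_\rho(0)$ is the open ball of radius $\rho$ centered at the origin, $\fint_B$ denotes the average over $B$, and $\star$ denotes convolution. *)

theory Defs
  imports "HOL-Analysis.Analysis"
begin

definition tail_int :: "(real \<Rightarrow> real) \<Rightarrow> real \<Rightarrow> real" where
  "tail_int w \<rho> = (LBINT t:{\<rho><..}. w t)"

definition w_weight :: "nat \<Rightarrow> real \<Rightarrow> real \<Rightarrow> (real \<Rightarrow> real) \<Rightarrow> real \<Rightarrow> real" where
  "w_weight d q \<alpha> w \<rho> = \<bar>w \<rho>\<bar> powr (q / (q - 1)) * \<rho> powr ((\<alpha> * q + 1 - real d) / (q - 1))"

definition ball_avg :: "('a::euclidean_space \<Rightarrow> real) \<Rightarrow> real \<Rightarrow> real" where
  "ball_avg u \<rho> = (LINT y:ball 0 \<rho>|lebesgue. \<bar>u y\<bar>) / measure lebesgue (ball (0::'a) \<rho>)"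

definition avg_weight :: "nat \<Rightarrow> real \<Rightarrow> real \<Rightarrow> ('a::euclidean_space \<Rightarrow> real) \<Rightarrow> real \<Rightarrow> real" where
  "avg_weight d q \<alpha> u \<rho> = (ball_avg u \<rho>) powr q * \<rho> powr ((real d - \<alpha>) * q + real d - 1)"

definition riesz_conv :: "real \<Rightarrow> ('a::euclidean_space \<Rightarrow> real) \<Rightarrow> 'a \<Rightarrow> real" where
  "riesz_conv \<alpha> u x = (LINT y|lebesgue. \<bar>u y\<bar> / norm (x - y) powr \<alpha>)"

end

theory Submission
  imports Defs
begin

text \<open>
  Write \<open>\<Phi>(\<rho>)\<close> for the integral of \<open>|u|\<close> over \<open>B\<^sub>\<rho>(0)\<close>, so that
  \<open>\<Phi>(\<rho>) = |B\<^sub>1| \<rho>\<^sup>d\<close> times the average of \<open>|u|\<close> over the ball. By Fubini,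
  \<open>\<integral> |u(x)| W(|x|) dx = \<integral>\<^sub>0\<^sup>\<infinity> w(\<rho>) \<Phi>(\<rho>) d\<rho>\<close>. Splitting
  \<open>\<rho>\<^sup>d = \<rho>\<^bsup>(\<alpha>q+1-d)/q\<^esup> \<rho>\<^bsup>((d-\<alpha>)q+d-1)/q\<^esup>\<close> and applying Hoelder with
  exponents \<open>q/(q-1)\<close> and \<open>q\<close> gives the first estimate, with constant \<open>|B\<^sub>1|\<close>.

  For the second, \<open>|x - y| \<le> 2|x|\<close> on \<open>B\<^bsub>|x|\<^esub>(0)\<close> gives
  \<open>\<Phi>(|x|) \<le> (2|x|)\<^sup>\<alpha> (|\<cdot>|\<^sup>-\<^sup>\<alpha> \<star> |u|)(x)\<close>; raising this to the power \<open>q\<close> and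
  integrating in polar coordinates bounds the ball-average integral by a multiple of
  \<open>\<parallel>|\<cdot>|\<^sup>-\<^sup>\<alpha> \<star> |u|\<parallel>\<^sub>q\<^sup>q\<close>.
\<close>

lemma Youngs_inequality_powr:
  fixes a b p q :: real
  assumes "p > 1" "q > 1" "1/p + 1/q = 1" "a \<ge> 0" "b \<ge> 0"
  shows "a powr (1/p) * b powr (1/q) \<le> a / p + b / q"
proof (cases "a = 0 \<or> b = 0")
  case False
  then show ?thesis
    using Youngs_inequality_0[of "1/p" "1/q" a b] assms by simp
qed (use assms in auto)

lemma Holder_inequality_powr:
  fixes f g :: "'b \<Rightarrow> real" and p q :: real
  assumes pq: "p > 1" "q > 1" "1/p + 1/q = 1"
    and f: "integrable M f" "\<And>x. f x \<ge> 0" and g: "integrable M g" "\<And>x. g x \<ge> 0"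
  shows "integrable M (\<lambda>x. f x powr (1/p) * g x powr (1/q))"
    and "(LINT x|M. f x powr (1/p) * g x powr (1/q))
           \<le> (LINT x|M. f x) powr (1/p) * (LINT x|M. g x) powr (1/q)"
proof -
  show int: "integrable M (\<lambda>x. f x powr (1/p) * g x powr (1/q))"
  proof (rule Bochner_Integration.integrable_bound)
    show "integrable M (\<lambda>x. f x / p + g x / q)"
      using f g by auto
    show "(\<lambda>x. f x powr (1/p) * g x powr (1/q)) \<in> borel_measurable M"
      using borel_measurable_integrable[OF f(1)] borel_measurable_integrable[OF g(1)] by measurable
    show "AE x in M. norm (f x powr (1/p) * g x powr (1/q)) \<le> norm (f x / p + g x / q)"
      using Youngs_inequality_powr[OF pq f(2) g(2)] f(2) g(2) pq
      by (intro AE_I2) (simp add: abs_mult)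
  qed
  define A where "A = (LINT x|M. f x)"
  define B where "B = (LINT x|M. g x)"
  have "A \<ge> 0" "B \<ge> 0"
    using f(2) g(2) by (auto simp: A_def B_def intro!: integral_nonneg_AE)
  show "(LINT x|M. f x powr (1/p) * g x powr (1/q)) \<le> A powr (1/p) * B powr (1/q)"
  proof (cases "A = 0 \<or> B = 0")
    case True
    then have "AE x in M. f x = 0 \<or> g x = 0"
      using integral_nonneg_eq_0_iff_AE[OF f(1) AE_I2[OF f(2)]]
        integral_nonneg_eq_0_iff_AE[OF g(1) AE_I2[OF g(2)]]
      by (auto simp: A_def B_def elim: eventually_mono)
    then have "AE x in M. f x powr (1/p) * g x powr (1/q) = 0"
      by (auto elim: eventually_mono)
    then show ?thesis
      using \<open>A \<ge> 0\<close> \<open>B \<ge> 0\<close> by (simp add: integral_eq_zero_AE)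
  next
    case False
    with \<open>A \<ge> 0\<close> \<open>B \<ge> 0\<close> have "A > 0" "B > 0" by auto
    \<comment> \<open>Young's inequality applied to \<open>f/A\<close> and \<open>g/B\<close>, integrated over \<open>M\<close>.\<close>
    have "(LINT x|M. f x powr (1/p) * g x powr (1/q)) / (A powr (1/p) * B powr (1/q))
        = (LINT x|M. (f x / A) powr (1/p) * (g x / B) powr (1/q))"
      using f(2) g(2) \<open>A > 0\<close> \<open>B > 0\<close> by (simp add: powr_divide)
    also have "\<dots> \<le> (LINT x|M. f x / A / p + g x / B / q)"
      using f g int \<open>A > 0\<close> \<open>B > 0\<close>
      by (intro integral_mono Youngs_inequality_powr[OF pq]) (auto simp: powr_divide)
    also have "\<dots> = 1"
      using f g \<open>A > 0\<close> \<open>B > 0\<close> pq by (simp add: A_def B_def)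
    finally show ?thesis
      using \<open>A > 0\<close> \<open>B > 0\<close> by (simp add: divide_le_eq)
  qed
qed

lemma integrable_integral_le_if_nn_integral_le:
  fixes f :: "'b \<Rightarrow> real"
  assumes "f \<in> borel_measurable M" "\<And>x. f x \<ge> 0" "B \<ge> 0"
    and "(\<integral>\<^sup>+x. ennreal (f x) \<partial>M) \<le> ennreal B"
  shows "integrable M f" and "integral\<^sup>L M f \<le> B"
proof -
  show "integrable M f"
    using assms by (intro integrableI_nonneg) (auto simp: order_le_less_trans)
  show "integral\<^sup>L M f \<le> B"
    using assms by (simp add: integral_eq_nn_integral enn2real_leI)
qed

lemma sigma_finite_measure_lebesgue: "sigma_finite_measure (lebesgue :: 'a::euclidean_space measure)"
proof
  show "\<exists>A. countable A \<and> A \<subseteq> sets (lebesgue :: 'a measure) \<and> \<Union> A = space lebesgue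
          \<and> (\<forall>a\<in>A. emeasure lebesgue a \<noteq> \<infinity>)"
    by (intro exI[of _ "range (\<lambda>n::nat. cball (0::'a) (real n))"])
       (auto simp: emeasure_cball real_arch_simple)
qed

lemma AE_lebesgue_ex:
  assumes "AE x in (lebesgue :: 'a::euclidean_space measure). P x"
  shows "\<exists>x. P x"
proof -
  have "emeasure (lebesgue :: 'a measure) (space lebesgue) \<noteq> 0"
    using emeasure_lborel_UNIV[where 'a='a] by simp
  then show ?thesis
    using eventually_happens[OF assms] by (auto simp: ae_filter_eq_bot_iff)
qed

lemma unit_ball_vol_neq_0 [simp]: "n \<ge> 0 \<Longrightarrow> unit_ball_vol n \<noteq> 0"
  using unit_ball_vol_pos[of n] by linarith

lemma distr_norm_lborel:
  "distr (lborel :: 'a::euclidean_space measure) borel norm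
     = density lborel (\<lambda>t. ennreal (DIM('a) * unit_ball_vol DIM('a) * t ^ (DIM('a) - 1))
                             * indicator {0..} t)"
  (is "?N = density lborel ?g")
proof (rule measure_eqI_generator_eq_countable[where E = "range lessThan" and \<Omega> = UNIV
      and A = "range (\<lambda>n::nat. {..<real n})"])
  have emeasure_lessThan: "emeasure ?N {..<r} = emeasure (density lborel ?g) {..<r}"
    and "emeasure ?N {..<r} \<noteq> \<infinity>" for r :: real
  proof -
    let ?d = "DIM('a)" and ?c = "unit_ball_vol DIM('a)"
    have "norm -` {..<r} = ball (0::'a) r"
      by auto
    then have distr: "emeasure ?N {..<r} = emeasure lborel (ball (0::'a) r)"
      by (simp add: emeasure_distr)
    have "emeasure ?N {..<r} = emeasure (density lborel ?g) {..<r}"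
    proof (cases "r > 0")
      case True
      have "emeasure (density lborel ?g) {..<r}
          = (\<integral>\<^sup>+t. ennreal (?d * ?c * t ^ (?d - 1)) * indicator {0..r} t \<partial>lborel)"
        by (subst emeasure_density)
           (auto intro!: nn_integral_cong_AE eventually_mono[OF AE_lborel_singleton[of r]]
             split: split_indicator)
      also have "\<dots> = ennreal (?c * r ^ ?d - ?c * 0 ^ ?d)"
        using True by (intro nn_integral_FTC_Icc) (auto intro!: derivative_eq_intros)
      finally show ?thesis
        using True by (simp add: distr emeasure_ball)
    next
      case False
      then have "ball (0::'a) r = {}" and "(\<lambda>t. ?g t * indicator {..<r} t) = (\<lambda>_. 0)"
        by (auto simp: fun_eq_iff split: split_indicator)
      then show ?thesis
        by (simp add: distr emeasure_density del: ball_eq_empty)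
    qed
    moreover have "emeasure lborel (ball (0::'a) r) \<noteq> \<infinity>"
      using emeasure_bounded_finite[of "ball (0::'a) r"] by simp
    ultimately show "emeasure ?N {..<r} = emeasure (density lborel ?g) {..<r}"
      and "emeasure ?N {..<r} \<noteq> \<infinity>"
      by (simp_all add: distr)
  qed
  then show "emeasure ?N X = emeasure (density lborel ?g) X"
    if "X \<in> range lessThan" for X
    using that by auto
  show "emeasure ?N X \<noteq> \<infinity>" if "X \<in> range (\<lambda>n::nat. {..<real n})" for X
    using that \<open>\<And>r. emeasure ?N {..<r} \<noteq> \<infinity>\<close> by auto
  show "Int_stable (range lessThan :: real set set)"
    by (auto simp: Int_stable_def greaterThan_Int_greaterThan)
  show "\<Union> (range (\<lambda>n::nat. {..<real n})) = UNIV"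
    using reals_Archimedean2 by auto
qed (auto simp: borel_Iio)

lemma nn_integral_radial:
  fixes f :: "real \<Rightarrow> ennreal"
  assumes "f \<in> borel_measurable borel"
  shows "(\<integral>\<^sup>+x. f (norm x) \<partial>(lebesgue :: 'a::euclidean_space measure))
       = (\<integral>\<^sup>+t. f t * ennreal (DIM('a) * unit_ball_vol DIM('a) * t ^ (DIM('a) - 1))
                 * indicator {0..} t \<partial>lborel)"
proof -
  have "(\<integral>\<^sup>+x. f (norm x) \<partial>(lebesgue :: 'a measure)) = (\<integral>\<^sup>+t. f t \<partial>distr (lborel :: 'a measure) borel norm)"
    using assms by (simp add: nn_integral_completion nn_integral_distr)
  then show ?thesis
    using assms by (simp add: distr_norm_lborel nn_integral_density mult.commute mult.left_commute)
qed

definition ball_integral :: "('a::euclidean_space \<Rightarrow> real) \<Rightarrow> real \<Rightarrow> real" where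
  "ball_integral u \<rho> = (LINT y:ball 0 \<rho>|lebesgue. \<bar>u y\<bar>)"

lemma ball_integral_nonneg: "ball_integral u \<rho> \<ge> 0"
  by (auto simp: ball_integral_def set_lebesgue_integral_def intro!: integral_nonneg_AE)

lemma ball_integral_nonpos_radius: "\<rho> \<le> 0 \<Longrightarrow> ball_integral u \<rho> = 0"
  by (simp add: ball_integral_def set_lebesgue_integral_def ball_empty)

text \<open>For \<open>\<rho> \<le> 0\<close> both sides vanish: the ball is empty and \<open>ball_avg\<close> divides by zero.\<close>

lemma ball_avg_eq_ball_integral:
  fixes u :: "'a::euclidean_space \<Rightarrow> real"
  shows "ball_avg u \<rho> = ball_integral u \<rho> / (unit_ball_vol DIM('a) * \<rho> ^ DIM('a))"
proof (cases "\<rho> > 0")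
  case True
  then show ?thesis
    by (simp add: ball_avg_def ball_integral_def content_ball)
qed (simp add: ball_avg_def ball_integral_nonpos_radius)

lemma ball_avg_nonneg: "ball_avg u \<rho> \<ge> 0"
  unfolding ball_avg_def set_lebesgue_integral_def
  by (auto intro!: divide_nonneg_nonneg integral_nonneg_AE)

lemma mono_ball_integral:
  assumes "\<forall>\<rho>>0. set_integrable lebesgue (ball 0 \<rho>) u"
  shows "mono (ball_integral u)"
proof
  fix s t :: real
  assume "s \<le> t"
  show "ball_integral u s \<le> ball_integral u t"
  proof (cases "s > 0")
    case True
    then have "set_integrable lebesgue (ball 0 r) (\<lambda>y. \<bar>u y\<bar>)" if "r \<ge> s" for r
      using assms that by (auto intro: set_integrable_abs)
    then show ?thesis
      using \<open>s \<le> t\<close> unfolding ball_integral_def set_lebesgue_integral_def set_integrable_def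
      by (intro integral_mono) (auto split: split_indicator)
  qed (simp add: ball_integral_nonpos_radius ball_integral_nonneg)
qed

lemma borel_measurable_ball_avg:
  fixes u :: "'a::euclidean_space \<Rightarrow> real"
  assumes "\<forall>\<rho>>0. set_integrable lebesgue (ball 0 \<rho>) u"
  shows "ball_avg u \<in> borel_measurable borel"
  using borel_measurable_mono[OF mono_ball_integral[OF assms]]
  unfolding ball_avg_eq_ball_integral[abs_def] by measurable

lemma integral_tail_int_eq_ball_integral:
  fixes u :: "'a::euclidean_space \<Rightarrow> real"
  assumes w: "w \<in> borel_measurable borel" and u: "u \<in> borel_measurable lebesgue"
    and u_loc: "\<forall>\<rho>>0. set_integrable lebesgue (ball 0 \<rho>) u"
    and int: "integrable lborel (\<lambda>t. \<bar>w t\<bar> * ball_integral u t)"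
  shows "(LINT x|lebesgue. \<bar>u x\<bar> * tail_int w (norm x)) = (LINT t|lborel. w t * ball_integral u t)"
proof -
  interpret pair_sigma_finite lborel "lebesgue :: 'a measure"
    by (simp add: pair_sigma_finite_def sigma_finite_measure_lebesgue lborel.sigma_finite_measure_axioms)
  define K where "K t x = w t * (indicator (ball (0::'a) t) x * \<bar>u x\<bar>)" for t x
  have K_tail: "(LINT t|lborel. K t x) = \<bar>u x\<bar> * tail_int w (norm x)" for x
  proof -
    have "K t x = \<bar>u x\<bar> * (indicator {norm x<..} t * w t)" for t
      by (simp add: K_def split: split_indicator)
    then show ?thesis
      by (simp add: tail_int_def set_lebesgue_integral_def)
  qed
  have K_ball: "(LINT x|lebesgue. K t x) = w t * ball_integral u t" for t
    by (simp add: K_def ball_integral_def set_lebesgue_integral_def)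
  have "integrable (lborel \<Otimes>\<^sub>M lebesgue) (\<lambda>(t, x). K t x)"
  proof (rule Fubini_integrable)
    have "norm \<in> borel_measurable (lebesgue :: 'a measure)"
      by (simp add: measurable_completion)
    then show "(\<lambda>(t, x). K t x) \<in> borel_measurable (lborel \<Otimes>\<^sub>M lebesgue)"
      unfolding K_def indicator_def mem_ball dist_0_norm using w u by measurable
    have "(LINT x|lebesgue. norm (K t x)) = \<bar>w t\<bar> * ball_integral u t" for t
      by (simp add: K_def ball_integral_def set_lebesgue_integral_def abs_mult)
    then show "integrable lborel (\<lambda>t. LINT x|lebesgue. norm (case (t, x) of (t, x) \<Rightarrow> K t x))"
      using int by simp
    have "integrable lebesgue (K t)" for t
    proof (cases "t > 0")
      case True
      then show ?thesis
        using set_integrable_abs[of lebesgue "ball 0 t" u] u_loc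
        by (simp add: K_def[abs_def] set_integrable_def)
    qed (simp add: K_def[abs_def] not_less ball_empty)
    then show "AE t in lborel. integrable lebesgue (\<lambda>x. case (t, x) of (t, x) \<Rightarrow> K t x)"
      by simp
  qed
  then show ?thesis
    using Fubini_integral[of K] by (simp add: K_tail K_ball)
qed

lemma abs_mult_ball_integral_eq_weights:
  fixes u :: "'a::euclidean_space \<Rightarrow> real"
  assumes q: "q > 1"
  shows "\<bar>w t\<bar> * ball_integral u t
       = unit_ball_vol DIM('a) * ((indicator {0<..} t * w_weight DIM('a) q \<alpha> w t) powr ((q - 1) / q)
           * (indicator {0<..} t * avg_weight DIM('a) q \<alpha> u t) powr (1 / q))"
proof (cases "t > 0")
  case True
  let ?d = "real DIM('a)"
  have "(w_weight DIM('a) q \<alpha> w t) powr ((q - 1) / q) = \<bar>w t\<bar> * t powr ((\<alpha> * q + 1 - ?d) / q)"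
    using True q by (simp add: w_weight_def powr_mult powr_powr)
  moreover have "(avg_weight DIM('a) q \<alpha> u t) powr (1 / q)
      = ball_avg u t * t powr (((?d - \<alpha>) * q + ?d - 1) / q)"
    using True q ball_avg_nonneg[of u t] by (simp add: avg_weight_def powr_mult powr_powr)
  moreover have "t powr ((\<alpha> * q + 1 - ?d) / q) * t powr (((?d - \<alpha>) * q + ?d - 1) / q) = t ^ DIM('a)"
    using True q by (simp add: powr_add[symmetric] powr_realpow add_divide_distrib[symmetric] algebra_simps)
  ultimately show ?thesis
    using True by (simp add: ball_avg_eq_ball_integral mult_ac)
qed (simp add: ball_integral_nonpos_radius)

lemma integral_abs_mult_ball_integral_le:
  fixes u :: "'a::euclidean_space \<Rightarrow> real"
  assumes q: "q > 1"
    and w: "set_integrable lborel {0<..} (w_weight DIM('a) q \<alpha> w)"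
    and u: "set_integrable lborel {0<..} (avg_weight DIM('a) q \<alpha> u)"
  shows "integrable lborel (\<lambda>t. \<bar>w t\<bar> * ball_integral u t)"
    and "(LINT t|lborel. \<bar>w t\<bar> * ball_integral u t)
           \<le> unit_ball_vol DIM('a) * (LBINT \<rho>:{0<..}. w_weight DIM('a) q \<alpha> w \<rho>) powr ((q - 1) / q)
               * (LBINT \<rho>:{0<..}. avg_weight DIM('a) q \<alpha> u \<rho>) powr (1 / q)"
proof -
  have pq: "q / (q - 1) > 1" "1 / (q / (q - 1)) + 1 / q = 1"
    using q by (auto simp: field_simps)
  have "w_weight DIM('a) q \<alpha> w t \<ge> 0" "avg_weight DIM('a) q \<alpha> u t \<ge> 0" for t
    by (simp_all add: w_weight_def avg_weight_def)
  note Holder = Holder_inequality_powr[OF pq(1) q pq(2), where M = lborel,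
      OF w[unfolded set_integrable_def] _ u[unfolded set_integrable_def]]
  have eq: "(\<lambda>t. \<bar>w t\<bar> * ball_integral u t) = (\<lambda>t. unit_ball_vol DIM('a)
      * ((indicator {0<..} t * w_weight DIM('a) q \<alpha> w t) powr ((q - 1) / q)
         * (indicator {0<..} t * avg_weight DIM('a) q \<alpha> u t) powr (1 / q)))"
    by (intro ext abs_mult_ball_integral_eq_weights[OF q])
  show "integrable lborel (\<lambda>t. \<bar>w t\<bar> * ball_integral u t)"
    unfolding eq using Holder(1) \<open>\<And>t. w_weight _ _ _ _ t \<ge> 0\<close> \<open>\<And>t. avg_weight _ _ _ _ t \<ge> 0\<close>
    by simp
  show "(LINT t|lborel. \<bar>w t\<bar> * ball_integral u t) \<le> unit_ball_vol DIM('a)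
      * (LBINT \<rho>:{0<..}. w_weight DIM('a) q \<alpha> w \<rho>) powr ((q - 1) / q)
      * (LBINT \<rho>:{0<..}. avg_weight DIM('a) q \<alpha> u \<rho>) powr (1 / q)"
    unfolding eq using Holder(2) \<open>\<And>t. w_weight _ _ _ _ t \<ge> 0\<close> \<open>\<And>t. avg_weight _ _ _ _ t \<ge> 0\<close>
    by (simp add: set_lebesgue_integral_def mult.assoc)
qed

lemma abs_integral_tail_int_le_ball_avg:
  fixes u :: "'a::euclidean_space \<Rightarrow> real"
  assumes q: "q > 1" and w: "w \<in> borel_measurable borel"
    and w_int: "set_integrable lborel {0<..} (w_weight DIM('a) q \<alpha> w)"
    and u: "u \<in> borel_measurable lebesgue"
    and u_loc: "\<forall>\<rho>>0. set_integrable lebesgue (ball 0 \<rho>) u"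
    and u_int: "set_integrable lborel {0<..} (avg_weight DIM('a) q \<alpha> u)"
  shows "\<bar>LINT x|lebesgue. \<bar>u x\<bar> * tail_int w (norm x)\<bar>
         \<le> unit_ball_vol DIM('a) * (LBINT \<rho>:{0<..}. w_weight DIM('a) q \<alpha> w \<rho>) powr ((q - 1) / q)
             * (LBINT \<rho>:{0<..}. avg_weight DIM('a) q \<alpha> u \<rho>) powr (1 / q)"
proof -
  note Holder = integral_abs_mult_ball_integral_le[OF q w_int u_int]
  have "\<bar>LINT x|lebesgue. \<bar>u x\<bar> * tail_int w (norm x)\<bar> = \<bar>LINT t|lborel. w t * ball_integral u t\<bar>"
    by (simp add: integral_tail_int_eq_ball_integral[OF w u u_loc Holder(1)])
  also have "\<dots> \<le> (LINT t|lborel. \<bar>w t\<bar> * ball_integral u t)"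
    using integral_abs_bound[of lborel "\<lambda>t. w t * ball_integral u t"]
    by (simp add: abs_mult ball_integral_nonneg)
  finally show ?thesis
    using Holder(2) by linarith
qed

lemma riesz_conv_nonneg: "riesz_conv \<alpha> u x \<ge> 0"
  by (auto simp: riesz_conv_def intro!: integral_nonneg_AE)

lemma indicator_ball_le_riesz_kernel:
  fixes x y :: "'a::real_normed_vector"
  assumes "\<alpha> \<ge> 0" "y \<noteq> x"
  shows "indicator (ball 0 \<rho>) y * \<bar>b\<bar> \<le> (norm x + \<rho>) powr \<alpha> * (\<bar>b\<bar> / norm (x - y) powr \<alpha>)"
proof (cases "y \<in> ball 0 \<rho>")
  case True
  have "norm (x - y) \<le> norm x + \<rho>"
    using norm_triangle_ineq4[of x y] True by simp
  then have "norm (x - y) powr \<alpha> \<le> (norm x + \<rho>) powr \<alpha>"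
    using assms by (intro powr_mono2) auto
  then have "\<bar>b\<bar> * norm (x - y) powr \<alpha> \<le> (norm x + \<rho>) powr \<alpha> * \<bar>b\<bar>"
    by (simp add: mult.commute mult_left_mono)
  moreover have "norm (x - y) powr \<alpha> > 0"
    using assms by simp
  ultimately show ?thesis
    using True by (simp add: field_simps)
qed simp

lemma riesz_integrable_imp_set_integrable_ball:
  fixes u :: "'a::euclidean_space \<Rightarrow> real"
  assumes "\<alpha> \<ge> 0" and u: "u \<in> borel_measurable lebesgue"
    and kernel: "integrable lebesgue (\<lambda>y. \<bar>u y\<bar> / norm (x - y) powr \<alpha>)"
  shows "set_integrable lebesgue (ball 0 \<rho>) u"
  unfolding set_integrable_def
proof (rule Bochner_Integration.integrable_bound)
  show "integrable lebesgue (\<lambda>y. (norm x + \<rho>) powr \<alpha> * (\<bar>u y\<bar> / norm (x - y) powr \<alpha>))"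
    by (rule integrable_mult_right[OF kernel])
  show "(\<lambda>y. indicator (ball 0 \<rho>) y *\<^sub>R u y) \<in> borel_measurable lebesgue"
    using u by (intro borel_measurable_scaleR borel_measurable_indicator) auto
  have "AE y in lebesgue. y \<noteq> x"
    using AE_completion[OF AE_lborel_singleton[of x]] by simp
  then show "AE y in lebesgue. norm (indicator (ball 0 \<rho>) y *\<^sub>R u y)
      \<le> norm ((norm x + \<rho>) powr \<alpha> * (\<bar>u y\<bar> / norm (x - y) powr \<alpha>))"
    using indicator_ball_le_riesz_kernel[OF \<open>\<alpha> \<ge> 0\<close>]
    by (auto elim!: eventually_mono simp: abs_mult)
qed

lemma ball_integral_le_riesz_conv:
  fixes u :: "'a::euclidean_space \<Rightarrow> real"
  assumes "\<alpha> \<ge> 0" and u: "u \<in> borel_measurable lebesgue"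
    and kernel: "integrable lebesgue (\<lambda>y. \<bar>u y\<bar> / norm (x - y) powr \<alpha>)"
  shows "ball_integral u \<rho> \<le> (norm x + \<rho>) powr \<alpha> * riesz_conv \<alpha> u x"
proof -
  have "AE y in lebesgue. y \<noteq> x"
    using AE_completion[OF AE_lborel_singleton[of x]] by simp
  moreover have "integrable lebesgue (\<lambda>y. indicator (ball 0 \<rho>) y * \<bar>u y\<bar>)"
    using set_integrable_abs[OF riesz_integrable_imp_set_integrable_ball[OF assms, of \<rho>]]
    by (simp add: set_integrable_def)
  ultimately have "ball_integral u \<rho>
      \<le> (LINT y|lebesgue. (norm x + \<rho>) powr \<alpha> * (\<bar>u y\<bar> / norm (x - y) powr \<alpha>))"
    unfolding ball_integral_def set_lebesgue_integral_def
    using indicator_ball_le_riesz_kernel[OF \<open>\<alpha> \<ge> 0\<close>]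
    by (intro integral_mono_AE integrable_mult_right[OF kernel]) (auto elim!: eventually_mono)
  then show ?thesis
    unfolding riesz_conv_def by (simp only: integral_mult_right_zero)
qed

lemma ball_avg_powr_le_riesz_conv:
  fixes u :: "'a::euclidean_space \<Rightarrow> real"
  assumes "\<alpha> \<ge> 0" "q \<ge> 0" "x \<noteq> 0" and u: "u \<in> borel_measurable lebesgue"
    and kernel: "integrable lebesgue (\<lambda>y. \<bar>u y\<bar> / norm (x - y) powr \<alpha>)"
  shows "ball_avg u (norm x) powr q * norm x powr ((real DIM('a) - \<alpha>) * q)
           \<le> (2 powr \<alpha> / unit_ball_vol DIM('a)) powr q * riesz_conv \<alpha> u x powr q"
proof -
  define t where "t = norm x"
  define c where "c = unit_ball_vol DIM('a)"
  define R where "R = riesz_conv \<alpha> u x"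
  have "t > 0"
    using \<open>x \<noteq> 0\<close> by (simp add: t_def)
  have "c > 0" "R \<ge> 0"
    by (simp_all add: c_def R_def riesz_conv_nonneg)
  have "norm x + t = 2 * t"
    by (simp add: t_def)
  then have "ball_integral u t \<le> (2 * t) powr \<alpha> * R"
    using ball_integral_le_riesz_conv[OF \<open>\<alpha> \<ge> 0\<close> u kernel, of t] by (simp add: R_def)
  then have "ball_integral u t * t powr (DIM('a) - \<alpha>) \<le> (2 * t) powr \<alpha> * R * t powr (DIM('a) - \<alpha>)"
    by (rule mult_right_mono) simp
  also have "\<dots> = 2 powr \<alpha> * R * (t powr \<alpha> * t powr (DIM('a) - \<alpha>))"
    using \<open>t > 0\<close> by (simp add: powr_mult)
  also have "t powr \<alpha> * t powr (DIM('a) - \<alpha>) = t ^ DIM('a)"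
    using \<open>t > 0\<close> by (simp add: powr_add[symmetric] powr_realpow)
  finally have "ball_integral u t * t powr (DIM('a) - \<alpha>) / (c * t ^ DIM('a))
      \<le> 2 powr \<alpha> * R * t ^ DIM('a) / (c * t ^ DIM('a))"
    by (rule divide_right_mono) (use \<open>t > 0\<close> \<open>c > 0\<close> in simp)
  then have "ball_integral u t / (c * t ^ DIM('a)) * t powr (DIM('a) - \<alpha>) \<le> 2 powr \<alpha> / c * R"
    using \<open>t > 0\<close> by simp
  then have "ball_avg u t * t powr (DIM('a) - \<alpha>) \<le> 2 powr \<alpha> / c * R"
    by (simp add: ball_avg_eq_ball_integral c_def)
  then have "(ball_avg u t * t powr (DIM('a) - \<alpha>)) powr q \<le> (2 powr \<alpha> / c * R) powr q"
    using \<open>q \<ge> 0\<close> ball_avg_nonneg[of u t] \<open>t > 0\<close> by (intro powr_mono2) auto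
  moreover have "(ball_avg u t * t powr (DIM('a) - \<alpha>)) powr q
      = ball_avg u t powr q * t powr ((DIM('a) - \<alpha>) * q)"
    using ball_avg_nonneg[of u t] \<open>t > 0\<close> by (simp add: powr_mult powr_powr)
  moreover have "(2 powr \<alpha> / c * R) powr q = (2 powr \<alpha> / c) powr q * R powr q"
    by (rule powr_mult)
  ultimately show ?thesis
    by (simp add: t_def c_def R_def)
qed

lemma integral_avg_weight_le_riesz_conv:
  fixes u :: "'a::euclidean_space \<Rightarrow> real"
  assumes "\<alpha> \<ge> 0" "q \<ge> 0" and u: "u \<in> borel_measurable lebesgue"
    and u_loc: "\<forall>\<rho>>0. set_integrable lebesgue (ball 0 \<rho>) u"
    and kernel: "AE x in lebesgue. integrable lebesgue (\<lambda>y. \<bar>u y\<bar> / norm (x - y) powr \<alpha>)"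
    and riesz: "integrable lebesgue (\<lambda>x. \<bar>riesz_conv \<alpha> u x\<bar> powr q)"
  defines "K \<equiv> (2 powr \<alpha> / unit_ball_vol DIM('a)) powr q"
  shows "set_integrable lborel {0<..} (avg_weight DIM('a) q \<alpha> u)" (is ?thesis1)
    and "(LBINT \<rho>:{0<..}. avg_weight DIM('a) q \<alpha> u \<rho>)
           \<le> K / (DIM('a) * unit_ball_vol DIM('a)) * (LINT x|lebesgue. \<bar>riesz_conv \<alpha> u x\<bar> powr q)" (is ?thesis2)
proof -
  let ?d = "DIM('a)" and ?c = "unit_ball_vol DIM('a)"
  define h where "h t = indicator {0<..} t * (ball_avg u t powr q * t powr ((real ?d - \<alpha>) * q))" for t
  define g where "g t = ?d * ?c * (indicator {0<..} t * avg_weight ?d q \<alpha> u t)" for t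
  have h_meas: "h \<in> borel_measurable borel"
    using borel_measurable_ball_avg[OF u_loc] unfolding h_def by measurable
  \<comment> \<open>In polar coordinates, \<open>g\<close> is the radial density of \<open>h (norm x)\<close>.\<close>
  have "ennreal (g t) = ennreal (h t) * ennreal (?d * ?c * t ^ (?d - 1)) * indicator {0..} t" for t
  proof (cases "t > 0")
    case True
    have "t powr (real ?d - 1) = t ^ (?d - 1)"
      using True DIM_positive[where 'a='a] by (simp add: powr_realpow[symmetric] of_nat_diff)
    then have "t powr ((real ?d - \<alpha>) * q + real ?d - 1) = t powr ((real ?d - \<alpha>) * q) * t ^ (?d - 1)"
      using powr_add[of t "(real ?d - \<alpha>) * q" "real ?d - 1"] by (simp add: add_diff_eq)
    then show ?thesis
      using True by (simp add: g_def h_def avg_weight_def ennreal_mult'[symmetric] mult_ac)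
  qed (simp add: g_def h_def)
  moreover have "(\<integral>\<^sup>+x. ennreal (h (norm x)) \<partial>(lebesgue :: 'a measure))
      = (\<integral>\<^sup>+t. ennreal (h t) * ennreal (?d * ?c * t ^ (?d - 1)) * indicator {0..} t \<partial>lborel)"
    using h_meas by (intro nn_integral_radial) measurable
  ultimately have "(\<integral>\<^sup>+t. ennreal (g t) \<partial>lborel) = (\<integral>\<^sup>+x. ennreal (h (norm x)) \<partial>(lebesgue :: 'a measure))"
    by simp
  also have "\<dots> \<le> (\<integral>\<^sup>+x. ennreal (K * \<bar>riesz_conv \<alpha> u x\<bar> powr q) \<partial>lebesgue)"
  proof (intro nn_integral_mono_AE)
    show "AE x in lebesgue. ennreal (h (norm x)) \<le> ennreal (K * \<bar>riesz_conv \<alpha> u x\<bar> powr q)"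
      using kernel
    proof eventually_elim
      case (elim x)
      then show ?case
        using ball_avg_powr_le_riesz_conv[OF assms(1,2) _ u elim, of] riesz_conv_nonneg[of \<alpha> u x]
        by (cases "x = 0") (auto simp: h_def K_def intro!: ennreal_leI)
    qed
  qed
  also have "\<dots> = ennreal (K * (LINT x|lebesgue. \<bar>riesz_conv \<alpha> u x\<bar> powr q))"
    using riesz by (subst nn_integral_eq_integral) (auto simp: K_def)
  finally have nn_le: "(\<integral>\<^sup>+t. ennreal (g t) \<partial>lborel)
      \<le> ennreal (K * (LINT x|lebesgue. \<bar>riesz_conv \<alpha> u x\<bar> powr q))" .
  have g_meas: "g \<in> borel_measurable lborel"
    using borel_measurable_ball_avg[OF u_loc] unfolding g_def avg_weight_def by measurable
  have g_nonneg: "g t \<ge> 0" for t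
    by (simp add: g_def avg_weight_def)
  have "K * (LINT x|lebesgue. \<bar>riesz_conv \<alpha> u x\<bar> powr q) \<ge> 0"
    by (simp add: K_def)
  note g = integrable_integral_le_if_nn_integral_le[OF g_meas g_nonneg this nn_le]
  have "?d * ?c > 0"
    by simp
  show ?thesis1
    using integrable_divide_zero[OF g(1), of "?d * ?c"] \<open>?d * ?c > 0\<close>
    by (simp add: set_integrable_def g_def)
  have "(\<lambda>t. indicator {0<..} t * avg_weight ?d q \<alpha> u t) = (\<lambda>t. g t / (?d * ?c))"
    by (simp add: g_def fun_eq_iff)
  then have "(LBINT \<rho>:{0<..}. avg_weight ?d q \<alpha> u \<rho>) = integral\<^sup>L lborel g / (?d * ?c)"
    by (simp add: set_lebesgue_integral_def)
  also have "\<dots> \<le> K * (LINT x|lebesgue. \<bar>riesz_conv \<alpha> u x\<bar> powr q) / (?d * ?c)"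
    using g(2) by (rule divide_right_mono) simp
  finally show ?thesis2
    by (simp only: times_divide_eq_left)
qed

lemma abs_integral_tail_int_le_riesz_conv:
  fixes u :: "'a::euclidean_space \<Rightarrow> real"
  assumes q: "q > 1" and "\<alpha> \<ge> 0" and w: "w \<in> borel_measurable borel"
    and w_int: "set_integrable lborel {0<..} (w_weight DIM('a) q \<alpha> w)"
    and u: "u \<in> borel_measurable lebesgue"
    and kernel: "AE x in lebesgue. integrable lebesgue (\<lambda>y. \<bar>u y\<bar> / norm (x - y) powr \<alpha>)"
    and riesz: "integrable lebesgue (\<lambda>x. \<bar>riesz_conv \<alpha> u x\<bar> powr q)"
  defines "K \<equiv> (2 powr \<alpha> / unit_ball_vol DIM('a)) powr q / (DIM('a) * unit_ball_vol DIM('a))"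
  shows "\<bar>LINT x|lebesgue. \<bar>u x\<bar> * tail_int w (norm x)\<bar>
         \<le> unit_ball_vol DIM('a) * (LBINT \<rho>:{0<..}. w_weight DIM('a) q \<alpha> w \<rho>) powr ((q - 1) / q)
             * K powr (1 / q) * (LINT x|lebesgue. \<bar>riesz_conv \<alpha> u x\<bar> powr q) powr (1 / q)"
proof -
  obtain x where "integrable lebesgue (\<lambda>y. \<bar>u y\<bar> / norm (x - y) powr \<alpha>)"
    using AE_lebesgue_ex[OF kernel] by blast
  then have u_loc: "\<forall>\<rho>>0. set_integrable lebesgue (ball 0 \<rho>) u"
    using riesz_integrable_imp_set_integrable_ball[OF \<open>\<alpha> \<ge> 0\<close> u] by blast
  have "q \<ge> 0"
    using q by simp
  note avg = integral_avg_weight_le_riesz_conv[OF \<open>\<alpha> \<ge> 0\<close> \<open>q \<ge> 0\<close> u u_loc kernel riesz]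
  define I where "I = (LINT x|lebesgue. \<bar>riesz_conv \<alpha> u x\<bar> powr q)"
  have "K \<ge> 0" "I \<ge> 0"
    by (simp_all add: K_def I_def)
  have "(LBINT \<rho>:{0<..}. avg_weight DIM('a) q \<alpha> u \<rho>) powr (1 / q) \<le> (K * I) powr (1 / q)"
    using avg(2) q by (intro powr_mono2) (simp_all add: K_def I_def set_lebesgue_integral_def
        integral_nonneg_AE avg_weight_def)
  also have "\<dots> = K powr (1 / q) * I powr (1 / q)"
    by (rule powr_mult)
  finally have avg_le: "(LBINT \<rho>:{0<..}. avg_weight DIM('a) q \<alpha> u \<rho>) powr (1 / q)
      \<le> K powr (1 / q) * I powr (1 / q)" .
  have "\<bar>LINT x|lebesgue. \<bar>u x\<bar> * tail_int w (norm x)\<bar>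
      \<le> unit_ball_vol DIM('a) * (LBINT \<rho>:{0<..}. w_weight DIM('a) q \<alpha> w \<rho>) powr ((q - 1) / q)
          * (LBINT \<rho>:{0<..}. avg_weight DIM('a) q \<alpha> u \<rho>) powr (1 / q)"
    by (rule abs_integral_tail_int_le_ball_avg[OF q w w_int u u_loc avg(1)])
  also have "\<dots> \<le> unit_ball_vol DIM('a) * (LBINT \<rho>:{0<..}. w_weight DIM('a) q \<alpha> w \<rho>) powr ((q - 1) / q)
          * (K powr (1 / q) * I powr (1 / q))"
    using avg_le by (intro mult_left_mono) simp_all
  finally show ?thesis
    by (simp add: I_def mult.assoc)
qed

theorem lemma2p4:
  fixes dummy :: "'a::euclidean_space"
  shows
   "(\<exists>C>0. \<forall>(q::real) (\<alpha>::real) (w::real \<Rightarrow> real) (u::'a \<Rightarrow> real).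
       q > 1 \<and> 0 < \<alpha> \<and> \<alpha> < real DIM('a) \<and> w \<in> borel_measurable borel \<and>
       set_integrable lborel {0<..} (w_weight DIM('a) q \<alpha> w) \<and>
       u \<in> borel_measurable lebesgue \<and>
       (\<forall>\<rho>>0. set_integrable lebesgue (ball 0 \<rho>) u) \<and>
       set_integrable lborel {0<..} (avg_weight DIM('a) q \<alpha> u)
       \<longrightarrow>
       \<bar>LINT x|lebesgue. \<bar>u x\<bar> * tail_int w (norm x)\<bar>
         \<le> C * (LBINT \<rho>:{0<..}. w_weight DIM('a) q \<alpha> w \<rho>) powr ((q - 1) / q)
             * (LBINT \<rho>:{0<..}. avg_weight DIM('a) q \<alpha> u \<rho>) powr (1 / q))
    \<and>
    (\<forall>(q::real) (\<alpha>::real) (w::real \<Rightarrow> real).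
       q > 1 \<and> 0 < \<alpha> \<and> \<alpha> < real DIM('a) \<and> w \<in> borel_measurable borel \<and>
       set_integrable lborel {0<..} (w_weight DIM('a) q \<alpha> w)
       \<longrightarrow>
       (\<exists>C>0. \<forall>u::'a \<Rightarrow> real.
          u \<in> borel_measurable lebesgue \<and>
          (AE x in lebesgue. integrable lebesgue (\<lambda>y. \<bar>u y\<bar> / norm (x - y) powr \<alpha>)) \<and>
          integrable lebesgue (\<lambda>x. \<bar>riesz_conv \<alpha> u x\<bar> powr q)
          \<longrightarrow>
          \<bar>LINT x|lebesgue. \<bar>u x\<bar> * tail_int w (norm x)\<bar>
            \<le> C * (LINT x|lebesgue. \<bar>riesz_conv \<alpha> u x\<bar> powr q) powr (1 / q)))"
proof (intro conjI, goal_cases)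
  case 1
  show ?case
    using abs_integral_tail_int_le_ball_avg by (intro exI[of _ "unit_ball_vol DIM('a)"]) auto
next
  case 2
  show ?case
  proof (intro allI impI, elim conjE, goal_cases)
    case (1 q \<alpha> w)
    define C where "C = unit_ball_vol DIM('a)
      * (LBINT \<rho>:{0<..}. w_weight DIM('a) q \<alpha> w \<rho>) powr ((q - 1) / q)
      * ((2 powr \<alpha> / unit_ball_vol DIM('a)) powr q / (DIM('a) * unit_ball_vol DIM('a))) powr (1 / q)"
    have "C \<ge> 0"
      by (simp add: C_def)
    have enlarge: "X \<le> (C + 1) * Y" if "X \<le> C * Y" "Y \<ge> 0" for X Y :: real
      using that by (simp add: distrib_right)
    note bound = abs_integral_tail_int_le_riesz_conv[OF \<open>q > 1\<close> less_imp_le[OF \<open>0 < \<alpha>\<close>] 1(4,5),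
        folded C_def]
    show ?case
      using \<open>C \<ge> 0\<close> by (intro exI[of _ "C + 1"]) (auto intro!: enlarge bound)
  qed
qed

end
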